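(* Let $G=(A\cup B,E)$ be a bipartite graph, let $\sigma_A=(a_1,\ldots,a_n)$ be an ordering of $A$ and $\sigma_B=(b_1,\ldots,b_m)$ an ordering of $B$. Let $H$ be the directed graph with vertex set $A\cup B$ and the following arcs: $a_{i-1}\to a_i$ for $2\le i\le n$; $b_{p-1}\to b_p$ for $2\le p\le m$; $a_i\to b_p$ whenever $a_ib_p\in E$; and $b_p\to a_j$ whenever there exist indices $i<j$ and $p<q$ with $a_ib_p\in E$, $a_jb_q\in E$ and $a_jb_p\notin E$. Then $G$ admits a Stick representation respecting $\sigma_A$ and $\sigma_B$ if and only if $H$ is acyclic.
   Context: A Stick representation of a bipartite graph $G=(A\cup B,E)$ (with $A$ horizontal and $B$ vertical) assigns to each vertex of $A$ a horizontal segment and to each vertex of $B$ a vertical segment such that the left endpoints of all horizontal segments and the bottom endpoints of all vertical segments lie on a fixed ground line $\ell$ of slope $-1$ (with the segments lying on the side of $\ell$ into which they extend rightward/upward), and a horizontal and a vertical segment intersect if and only if the corresponding vertices are adjacent in $G$. The representation respects $\sigma_A$ and $\sigma_B$ if, ordering the points where segments touch $\ell$ from left to right, the $i$th horizontal segment corresponds to the $i$th vertex of $\sigma_A$ and the $j$th vertical segment corresponds to the $j$th vertex of $\sigma_B$. *)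

theory Defs
  imports Complex_Main
begin

text \<open>Ground line: the line y = -x (slope -1) in the plane real \<times> real.
  A point of the ground line is determined by its x-coordinate c, namely (c, -c).\<close>

definition hseg :: "real \<Rightarrow> real \<Rightarrow> (real \<times> real) set" where
  "hseg c len = {(t, - c) | t. c \<le> t \<and> t \<le> c + len}"

definition vseg :: "real \<Rightarrow> real \<Rightarrow> (real \<times> real) set" where
  "vseg c len = {(c, s) | s. - c \<le> s \<and> s \<le> - c + len}"

text \<open>sa, sb: the orderings sigma_A, sigma_B (0-indexed lists); E: edge set, pairs (a,b)
  with a in A, b in B. x v: x-coordinate of the ground-line point of the segment of v;
  len v: its length.\<close>

definition stick_rep ::
  "'v list \<Rightarrow> 'v list \<Rightarrow> ('v \<times> 'v) set \<Rightarrow> ('v \<Rightarrow> real) \<Rightarrow> ('v \<Rightarrow> real) \<Rightarrow> bool" where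
  "stick_rep sa sb E x len \<longleftrightarrow>
     (\<forall>v \<in> set sa \<union> set sb. len v > 0) \<and>
     inj_on x (set sa \<union> set sb) \<and>
     (\<forall>a \<in> set sa. \<forall>b \<in> set sb.
        ((a, b) \<in> E \<longleftrightarrow> hseg (x a) (len a) \<inter> vseg (x b) (len b) \<noteq> {}))"

definition respects_orders :: "'v list \<Rightarrow> 'v list \<Rightarrow> ('v \<Rightarrow> real) \<Rightarrow> bool" where
  "respects_orders sa sb x \<longleftrightarrow>
     (\<forall>i j. i < j \<and> j < length sa \<longrightarrow> x (sa ! i) < x (sa ! j)) \<and>
     (\<forall>p q. p < q \<and> q < length sb \<longrightarrow> x (sb ! p) < x (sb ! q))"

definition H_arcs :: "'v list \<Rightarrow> 'v list \<Rightarrow> ('v \<times> 'v) set \<Rightarrow> ('v \<times> 'v) set" where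
  "H_arcs sa sb E =
     {(sa ! (i - 1), sa ! i) | i. 1 \<le> i \<and> i < length sa} \<union>
     {(sb ! (p - 1), sb ! p) | p. 1 \<le> p \<and> p < length sb} \<union>
     E \<union>
     {(sb ! p, sa ! j) | p j. \<exists>i q. i < j \<and> p < q \<and> j < length sa \<and> q < length sb \<and>
         (sa ! i, sb ! p) \<in> E \<and> (sa ! j, sb ! q) \<in> E \<and> (sa ! j, sb ! p) \<notin> E}"

end

theory Submission
  imports Defs
begin

text \<open>A horizontal stick starting at ground coordinate c and a vertical stick starting at d can
  only meet in the point (d, -c), so they cross iff c \<le> d and d - c is at most both lengths.
  In a Stick representation every arc of H therefore increases the ground coordinate: for the
  arc b_p \<rightarrow> a_j, if a_j were not to the right of b_p, then a_j (reaching b_q further right) and b_p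
  (reaching down to a_i further left) would be long enough to cross.
  Conversely, an acyclic H has an injective integer numbering increasing along its arcs.
  Placing the sticks at these positions and giving each stick exactly the length needed to
  reach its farthest neighbour realises every edge, and a spurious crossing of a_j and b_p would
  exhibit neighbours a_i of b_p and b_q of a_j witnessing the arc b_p \<rightarrow> a_j, against the numbering.\<close>

lemma hseg_vseg_meet_iff:
  "hseg c l \<inter> vseg d m \<noteq> {} \<longleftrightarrow> c \<le> d \<and> d - c \<le> l \<and> d - c \<le> m"
proof
  assume "hseg c l \<inter> vseg d m \<noteq> {}"
  then show "c \<le> d \<and> d - c \<le> l \<and> d - c \<le> m"
    unfolding hseg_def vseg_def by auto
next
  assume "c \<le> d \<and> d - c \<le> l \<and> d - c \<le> m"
  then have "(d, - c) \<in> hseg c l \<inter> vseg d m"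
    unfolding hseg_def vseg_def by auto
  then show "hseg c l \<inter> vseg d m \<noteq> {}" by blast
qed

lemma stick_rep_edge_iff:
  assumes "stick_rep sa sb E x len" "a \<in> set sa" "b \<in> set sb"
  shows "(a, b) \<in> E \<longleftrightarrow> x a \<le> x b \<and> x b - x a \<le> len a \<and> x b - x a \<le> len b"
  using assms unfolding stick_rep_def hseg_vseg_meet_iff by blast

lemma respects_orders_iff_sorted_wrt:
  "respects_orders sa sb x \<longleftrightarrow>
     sorted_wrt (\<lambda>u v. x u < x v) sa \<and> sorted_wrt (\<lambda>u v. x u < x v) sb"
  unfolding respects_orders_def sorted_wrt_iff_nth_less by blast

lemma sorted_wrt_less_nth_imp_less:
  fixes f :: "'a \<Rightarrow> 'b :: linorder"
  assumes sorted: "sorted_wrt (\<lambda>u v. f u < f v) xs" and "i < length xs" "j < length xs"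
    and less: "f (xs ! i) < f (xs ! j)"
  shows "i < j"
proof (rule ccontr)
  assume "\<not> i < j"
  then consider "i = j" | "j < i" by linarith
  then show False
    using sorted_wrt_nth_less[OF sorted, of j i] less \<open>i < length xs\<close> by cases auto
qed

lemma H_arcs_subset:
  assumes "E \<subseteq> set sa \<times> set sb"
  shows "H_arcs sa sb E \<subseteq> (set sa \<union> set sb) \<times> (set sa \<union> set sb)"
  using assms unfolding H_arcs_def by auto

lemma E_subset_H_arcs: "E \<subseteq> H_arcs sa sb E"
  unfolding H_arcs_def by blast

lemma H_arcs_crossingI:
  assumes "i < j" "p < q" "j < length sa" "q < length sb"
    "(sa ! i, sb ! p) \<in> E" "(sa ! j, sb ! q) \<in> E" "(sa ! j, sb ! p) \<notin> E"
  shows "(sb ! p, sa ! j) \<in> H_arcs sa sb E"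
  unfolding H_arcs_def using assms by blast

lemma H_arcsE:
  assumes "(u, v) \<in> H_arcs sa sb E"
  obtains (next_a) i where "u = sa ! (i - 1)" "v = sa ! i" "1 \<le> i" "i < length sa"
    | (next_b) p where "u = sb ! (p - 1)" "v = sb ! p" "1 \<le> p" "p < length sb"
    | (edge) "(u, v) \<in> E"
    | (crossing) p j i q where "u = sb ! p" "v = sa ! j" "i < j" "p < q"
        "j < length sa" "q < length sb" "(sa ! i, sb ! p) \<in> E" "(sa ! j, sb ! q) \<in> E"
        "(sa ! j, sb ! p) \<notin> E"
  using assms unfolding H_arcs_def by blast

lemma respects_orders_if_H_arcs_increasing:
  assumes "\<And>u v. (u, v) \<in> H_arcs sa sb E \<Longrightarrow> x u < x v"
  shows "respects_orders sa sb x"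
proof -
  have trans: "transp (\<lambda>u v. x u < x v)" by (auto intro: transpI)
  have "(sa ! i, sa ! Suc i) \<in> H_arcs sa sb E" if "Suc i < length sa" for i
    using that unfolding H_arcs_def by (auto intro!: exI[of _ "Suc i"])
  moreover have "(sb ! p, sb ! Suc p) \<in> H_arcs sa sb E" if "Suc p < length sb" for p
    using that unfolding H_arcs_def by (auto intro!: exI[of _ "Suc p"])
  ultimately show ?thesis
    unfolding respects_orders_iff_sorted_wrt sorted_wrt_iff_nth_Suc_transp[OF trans]
    using assms by blast
qed

lemma stick_rep_H_arc_increasing:
  assumes rep: "stick_rep sa sb E x len" and ord: "respects_orders sa sb x"
    and disj: "set sa \<inter> set sb = {}" and E: "E \<subseteq> set sa \<times> set sb"
    and arc: "(u, v) \<in> H_arcs sa sb E"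
  shows "x u < x v"
  using arc
proof (cases rule: H_arcsE)
  case (next_a i)
  then show ?thesis using ord unfolding respects_orders_def by simp
next
  case (next_b p)
  then show ?thesis using ord unfolding respects_orders_def by simp
next
  case edge
  then have uv: "u \<in> set sa" "v \<in> set sb" using E by auto
  then have "x u \<noteq> x v"
    using disj rep unfolding stick_rep_def by (metis UnI1 UnI2 disjoint_iff inj_onD)
  then show ?thesis using stick_rep_edge_iff[OF rep uv] edge by auto
next
  case (crossing p j i q)
  have mem: "sa ! i \<in> set sa" "sa ! j \<in> set sa" "sb ! p \<in> set sb" "sb ! q \<in> set sb"
    using crossing by auto
  have "x (sa ! i) < x (sa ! j)" "x (sb ! p) < x (sb ! q)"
    using ord crossing unfolding respects_orders_def by auto
  moreover have "x (sb ! p) - x (sa ! i) \<le> len (sb ! p)" "x (sb ! q) - x (sa ! j) \<le> len (sa ! j)"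
    using stick_rep_edge_iff[OF rep mem(1,3)] stick_rep_edge_iff[OF rep mem(2,4)] crossing by auto
  moreover have "\<not> (x (sa ! j) \<le> x (sb ! p) \<and> x (sb ! p) - x (sa ! j) \<le> len (sa ! j)
      \<and> x (sb ! p) - x (sa ! j) \<le> len (sb ! p))"
    using stick_rep_edge_iff[OF rep mem(2,3)] crossing by blast
  ultimately show ?thesis using crossing by auto
qed

lemma card_trancl_predecessors_less:
  assumes "finite R" "acyclic R" "(u, v) \<in> R"
  shows "card {w. (w, u) \<in> R\<^sup>+} < card {w. (w, v) \<in> R\<^sup>+}"
proof (rule psubset_card_mono)
  have "{w. (w, v) \<in> R\<^sup>+} \<subseteq> Domain (R\<^sup>+)" by blast
  then show "finite {w. (w, v) \<in> R\<^sup>+}"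
    using finite_Domain[OF assms(1)] unfolding trancl_domain by (rule finite_subset)
  have "u \<notin> {w. (w, u) \<in> R\<^sup>+}" using assms(2) unfolding acyclic_def by blast
  moreover have "insert u {w. (w, u) \<in> R\<^sup>+} \<subseteq> {w. (w, v) \<in> R\<^sup>+}"
    using assms(3) by (auto intro: trancl_into_trancl)
  ultimately show "{w. (w, u) \<in> R\<^sup>+} \<subset> {w. (w, v) \<in> R\<^sup>+}" by blast
qed

lemma acyclic_injective_numbering:
  assumes "finite V" "R \<subseteq> V \<times> V" "acyclic R"
  obtains f :: "'a \<Rightarrow> nat" where "inj_on f V" "\<And>u v. (u, v) \<in> R \<Longrightarrow> f u < f v"
proof -
  obtain g :: "'a \<Rightarrow> nat" and n where g: "g ` V = {i. i < n}" "inj_on g V"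
    using finite_imp_inj_to_nat_seg[OF assms(1)] by blast
  have g_less: "g v < n" if "v \<in> V" for v using g(1) that by blast
  define rank where "rank v = card {w. (w, v) \<in> R\<^sup>+}" for v
  have "finite R" using assms(1,2) by (meson finite_SigmaI finite_subset)
  then have rank_less: "rank u < rank v" if "(u, v) \<in> R" for u v
    using card_trancl_predecessors_less[OF _ assms(3) that] unfolding rank_def by blast
  \<comment> \<open>g breaks ties between vertices of equal rank\<close>
  define f where "f v = rank v * n + g v" for v
  show ?thesis
  proof
    show "inj_on f V"
    proof (rule inj_onI)
      fix u v assume "u \<in> V" "v \<in> V" "f u = f v"
      then have "f u mod n = f v mod n" by simp
      then have "g u = g v" using g_less \<open>u \<in> V\<close> \<open>v \<in> V\<close> unfolding f_def by simp
      then show "u = v" using inj_onD[OF g(2)] \<open>u \<in> V\<close> \<open>v \<in> V\<close> by blast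
    qed
  next
    fix u v assume uv: "(u, v) \<in> R"
    then have "g u < n" using g_less assms(2) by blast
    moreover have "(rank u + 1) * n \<le> rank v * n"
      using rank_less[OF uv] by (intro mult_right_mono) auto
    ultimately show "f u < f v" unfolding f_def by (simp add: algebra_simps)
  qed
qed

lemma H_arcs_crossing_by_position:
  fixes x :: "'v \<Rightarrow> real"
  assumes incr: "\<And>u v. (u, v) \<in> H_arcs sa sb E \<Longrightarrow> x u < x v"
    and mem: "a' \<in> set sa" "a \<in> set sa" "b \<in> set sb" "b' \<in> set sb"
    and pos: "x a' < x a" "x b < x b'"
    and edges: "(a', b) \<in> E" "(a, b') \<in> E" "(a, b) \<notin> E"
  shows "(b, a) \<in> H_arcs sa sb E"
proof -
  obtain i j where i: "i < length sa" "a' = sa ! i" and j: "j < length sa" "a = sa ! j"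
    using mem(1,2) by (metis in_set_conv_nth)
  obtain p q where p: "p < length sb" "b = sb ! p" and q: "q < length sb" "b' = sb ! q"
    using mem(3,4) by (metis in_set_conv_nth)
  have "respects_orders sa sb x" using incr by (rule respects_orders_if_H_arcs_increasing)
  then have "sorted_wrt (\<lambda>u v. x u < x v) sa" "sorted_wrt (\<lambda>u v. x u < x v) sb"
    unfolding respects_orders_iff_sorted_wrt by blast+
  then have "i < j" "p < q"
    using sorted_wrt_less_nth_imp_less i(1) j(1) p(1) q(1) pos(1)[unfolded i(2) j(2)]
      pos(2)[unfolded p(2) q(2)] by blast+
  then show ?thesis
    using H_arcs_crossingI j(1) q(1) edges unfolding i(2) j(2) p(2) q(2) by blast
qed

text \<open>The default length 1/2 is below the distance of any two distinct integer positions.\<close>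

definition stick_len :: "('v \<times> 'v) set \<Rightarrow> ('v \<Rightarrow> real) \<Rightarrow> 'v \<Rightarrow> real" where
  "stick_len E x v = Max (insert (1/2) ((\<lambda>w. \<bar>x w - x v\<bar>) ` {w. (v, w) \<in> E \<or> (w, v) \<in> E}))"

lemma finite_stick_len_candidates:
  assumes "finite E"
  shows "finite ((\<lambda>w. \<bar>x w - x v\<bar>) ` {w. (v, w) \<in> E \<or> (w, v) \<in> E})"
proof -
  have "{w. (v, w) \<in> E \<or> (w, v) \<in> E} \<subseteq> fst ` E \<union> snd ` E" by force
  then show ?thesis using assms by (auto intro: finite_subset)
qed

lemma stick_len_ge_half: "finite E \<Longrightarrow> 1/2 \<le> stick_len E x v"
  unfolding stick_len_def by (intro Max_ge) (auto simp: finite_stick_len_candidates)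

lemma stick_len_ge_neighbour_dist:
  "finite E \<Longrightarrow> (v, w) \<in> E \<or> (w, v) \<in> E \<Longrightarrow> \<bar>x w - x v\<bar> \<le> stick_len E x v"
  unfolding stick_len_def by (intro Max_ge) (auto simp: finite_stick_len_candidates)

lemma stick_len_attained:
  assumes "finite E" "1/2 < stick_len E x v"
  obtains w where "(v, w) \<in> E \<or> (w, v) \<in> E" "stick_len E x v = \<bar>x w - x v\<bar>"
proof -
  have "stick_len E x v \<in> insert (1/2) ((\<lambda>w. \<bar>x w - x v\<bar>) ` {w. (v, w) \<in> E \<or> (w, v) \<in> E})"
    unfolding stick_len_def using finite_stick_len_candidates[OF assms(1)] by (intro Max_in) auto
  then show ?thesis using assms(2) that by auto
qed

lemma stick_len_crossing_imp_edge:
  assumes disj: "set sa \<inter> set sb = {}" and E: "E \<subseteq> set sa \<times> set sb"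
    and inj: "inj_on x (set sa \<union> set sb)" and int: "\<And>v. v \<in> set sa \<union> set sb \<Longrightarrow> x v \<in> \<int>"
    and incr: "\<And>u v. (u, v) \<in> H_arcs sa sb E \<Longrightarrow> x u < x v"
    and a: "a \<in> set sa" and b: "b \<in> set sb"
    and cross: "x a \<le> x b" "x b - x a \<le> stick_len E x a" "x b - x a \<le> stick_len E x b"
  shows "(a, b) \<in> E"
proof (rule ccontr)
  assume nonedge: "(a, b) \<notin> E"
  have finE: "finite E" by (rule finite_subset[OF E]) simp
  have E_incr: "x a' < x b'" if "(a', b') \<in> E" for a' b'
    using incr E_subset_H_arcs that by blast
  have a_not_b: "a \<notin> set sb" "b \<notin> set sa" using a b disj by auto
  have x_inj: "x u \<noteq> x v" if "u \<in> set sa \<union> set sb" "v \<in> set sa \<union> set sb" "u \<noteq> v" for u v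
    using inj that by (auto dest: inj_onD)
  have "x a \<noteq> x b" using x_inj a b a_not_b by blast
  moreover have "x b - x a \<in> \<int>" using int a b by simp
  ultimately have gap: "1 \<le> x b - x a" using Ints_nonzero_abs_ge1[of "x b - x a"] cross(1) by simp
  have "1/2 < stick_len E x a" using cross(2) gap by linarith
  then obtain b' where b'_nb: "(a, b') \<in> E \<or> (b', a) \<in> E" and len_a: "stick_len E x a = \<bar>x b' - x a\<bar>"
    by (rule stick_len_attained[OF finE])
  have ab': "(a, b') \<in> E" using b'_nb E a_not_b by auto
  with len_a have "stick_len E x a = x b' - x a" using E_incr by fastforce
  then have "x b \<le> x b'" using cross(2) by linarith
  moreover have "b' \<noteq> b" using ab' nonedge by blast
  moreover have b'_mem: "b' \<in> set sb" using ab' E by auto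
  ultimately have b_b': "x b < x b'" using x_inj b by fastforce
  have "1/2 < stick_len E x b" using cross(3) gap by linarith
  then obtain a' where a'_nb: "(b, a') \<in> E \<or> (a', b) \<in> E" and len_b: "stick_len E x b = \<bar>x a' - x b\<bar>"
    by (rule stick_len_attained[OF finE])
  have a'b: "(a', b) \<in> E" using a'_nb E a_not_b by auto
  with len_b have "stick_len E x b = x b - x a'" using E_incr by fastforce
  then have "x a' \<le> x a" using cross(3) by linarith
  moreover have "a' \<noteq> a" using a'b nonedge by blast
  moreover have a'_mem: "a' \<in> set sa" using a'b E by auto
  ultimately have a'_a: "x a' < x a" using x_inj a by fastforce
  have "(b, a) \<in> H_arcs sa sb E"
    using H_arcs_crossing_by_position[OF incr a'_mem a b b'_mem a'_a b_b' a'b ab' nonedge] .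
  then show False using incr cross(1) by fastforce
qed

lemma stick_rep_stick_len:
  assumes "set sa \<inter> set sb = {}" and E: "E \<subseteq> set sa \<times> set sb"
    and inj: "inj_on x (set sa \<union> set sb)" and "\<And>v. v \<in> set sa \<union> set sb \<Longrightarrow> x v \<in> \<int>"
    and incr: "\<And>u v. (u, v) \<in> H_arcs sa sb E \<Longrightarrow> x u < x v"
  shows "stick_rep sa sb E x (stick_len E x)"
proof -
  have finE: "finite E" by (rule finite_subset[OF E]) simp
  have "(a, b) \<in> E \<longleftrightarrow> x a \<le> x b \<and> x b - x a \<le> stick_len E x a \<and> x b - x a \<le> stick_len E x b"
    if a: "a \<in> set sa" and b: "b \<in> set sb" for a b
  proof
    assume ab: "(a, b) \<in> E"
    then have "x a < x b" using incr E_subset_H_arcs by blast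
    then show "x a \<le> x b \<and> x b - x a \<le> stick_len E x a \<and> x b - x a \<le> stick_len E x b"
      using stick_len_ge_neighbour_dist[OF finE, of a b x] stick_len_ge_neighbour_dist[OF finE, of b a x] ab
      by auto
  qed (use stick_len_crossing_imp_edge[OF assms a b] in blast)
  moreover have "0 < stick_len E x v" for v using stick_len_ge_half[OF finE, of x v] by linarith
  ultimately show ?thesis unfolding stick_rep_def hseg_vseg_meet_iff using inj by blast
qed

theorem lemma1:
  fixes sa sb :: "'v list" and E :: "('v \<times> 'v) set"
  assumes "distinct sa" and "distinct sb" and "set sa \<inter> set sb = {}"
    and "E \<subseteq> set sa \<times> set sb"
  shows "(\<exists>(x :: 'v \<Rightarrow> real) len. stick_rep sa sb E x len \<and> respects_orders sa sb x)
         \<longleftrightarrow> acyclic (H_arcs sa sb E)"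
proof
  assume "\<exists>(x :: 'v \<Rightarrow> real) len. stick_rep sa sb E x len \<and> respects_orders sa sb x"
  then obtain x :: "'v \<Rightarrow> real" and len
    where rep: "stick_rep sa sb E x len" and ord: "respects_orders sa sb x" by blast
  have "x u < x v" if "(u, v) \<in> H_arcs sa sb E" for u v
    using stick_rep_H_arc_increasing[OF rep ord assms(3,4) that] .
  then show "acyclic (H_arcs sa sb E)" by (intro acyclicI_order[where f = "\<lambda>v. - x v"]) simp
next
  assume "acyclic (H_arcs sa sb E)"
  moreover have "finite (set sa \<union> set sb)" by simp
  ultimately obtain f :: "'v \<Rightarrow> nat" where inj: "inj_on f (set sa \<union> set sb)"
    and incr: "\<And>u v. (u, v) \<in> H_arcs sa sb E \<Longrightarrow> f u < f v"
    using acyclic_injective_numbering H_arcs_subset[OF assms(4)] by metis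
  define x :: "'v \<Rightarrow> real" where "x v = real (f v)" for v
  have "inj_on x (set sa \<union> set sb)" using inj unfolding x_def inj_on_def by simp
  moreover have "x v \<in> \<int>" for v unfolding x_def by simp
  moreover have x_incr: "x u < x v" if "(u, v) \<in> H_arcs sa sb E" for u v
    using incr[OF that] unfolding x_def by simp
  ultimately have "stick_rep sa sb E x (stick_len E x)"
    using stick_rep_stick_len[OF assms(3,4)] by blast
  moreover have "respects_orders sa sb x" using x_incr by (rule respects_orders_if_H_arcs_increasing)
  ultimately show "\<exists>(x :: 'v \<Rightarrow> real) len. stick_rep sa sb E x len \<and> respects_orders sa sb x"
    by blast
qed

end
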